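(* Let $s\ge1$, $P\ge 2s+1$, $d\ge1$, and let $\mathbf{W}$ and the randomized map $\phi$ be as in the context. Let $\mathbf{G}\in\mathbb{R}^{d\times P}$ be arbitrary and let $\mathbf{N}=[\mathbf{n}_1,\dots,\mathbf{n}_P]\in\mathbb{R}^{d\times P}$ be fixed (chosen independently of the randomness of $\phi$) with $|\{j:\mathbf{n}_j\neq\mathbf{0}\}|\le s$. Then with probability 1, $\phi(\mathbf{G}\mathbf{W}+\mathbf{N})=\{j:\mathbf{n}_j\neq \mathbf{0}\}$.
   Context: Let $\mathbf{C}\in\mathbb{C}^{P\times P}$ be the IDFT matrix $\mathbf{C}_{jk}=\frac{1}{\sqrt P}\exp\!\big(\frac{2\pi i}{P}(j-1)(k-1)\big)$, $j,k=1,\dots,P$; let $\mathbf{C}_L$ be its first $P-2s$ rows and $\mathbf{C}_R$ its last $2s$ rows; $\dagger$ denotes conjugate transpose. Let $\mathbf{A}^{Cyc}\in\{0,1\}^{P\times P}$ be given by $\mathbf{A}^{Cyc}_{k,\ell}=1$ iff $(\ell-k)\bmod P\in\{0,1,\dots,2s\}$. For each $k$, let $\alpha_k=\{\ell:\mathbf{A}^{Cyc}_{k,\ell}=0\}$, and let $\mathbf{q}_k\in\mathbb{C}^{1\times(P-2s-1)}$ be the unique row vector with $[\mathbf{q}_k,\,1]\,(\mathbf{C}_L)_{\cdot,\alpha_k}=\mathbf{0}$. Let $\mathbf{Q}\in\mathbb{C}^{P\times(P-2s-1)}$ have $k$-th row $\mathbf{q}_k$, and $\mathbf{W}=[\mathbf{Q},\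 \mathbf{1}_P]\,\mathbf{C}_L$. The map $\phi$: given $\mathbf{R}\in\mathbb{C}^{d\times P}$, draw $\mathbf{f}\in\mathbb{R}^{1\times d}$ with distribution $\mathcal{N}(\mathbf{1}_{1\times d},\mathbf{I}_d)$; compute $(h_{P-2s},h_{P-2s+1},\dots,h_{P-1})=\mathbf{f}\mathbf{R}\mathbf{C}_R^{\dagger}$; let $\beta=(\beta_0,\dots,\beta_{s-1})$ be any solution of $\sum_{k=0}^{s-1}\beta_k h_{P-s-i+k}=h_{P-i}$ for $i=1,\dots,s$; then for $\ell=0,1,\dots,P-2s-1$ in increasing order set $h_\ell=\sum_{u=0}^{s-1}\beta_u h_{\ell+u-s}$, where indices are taken modulo $P$ (so $h_{-m}=h_{P-m}$); let $\mathbf{h}=(h_0,\dots,h_{P-1})^T$ and $\mathbf{t}=(t_0,\dots,t_{P-1})^T=\mathbf{C}\mathbf{h}$; return $\phi(\mathbf{R})=\{j\in\{1,\dots,P\}:t_{j-1}\neq 0\}$. *)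

theory Defs
  imports "HOL-Probability.Probability"
begin

(* All matrices are functions nat => nat => _ with 0-based indices; row j / column k of the
   paper (1-based) correspond to index j-1 / k-1 here. *)

definition idft :: "nat \<Rightarrow> nat \<Rightarrow> nat \<Rightarrow> complex" where
  "idft P j k = complex_of_real (1 / sqrt (real P)) *
      exp (2 * complex_of_real pi * \<i> * of_nat j * of_nat k / of_nat P)"

(* C_L = first P-2s rows of C *)
definition CL :: "nat \<Rightarrow> nat \<Rightarrow> nat \<Rightarrow> nat \<Rightarrow> complex" where
  "CL P s j k = idft P j k"

definition CR :: "nat \<Rightarrow> nat \<Rightarrow> nat \<Rightarrow> nat \<Rightarrow> complex" where
  "CR P s m k = idft P (P - 2 * s + m) k"

(* A^Cyc_{k,l} = 1 iff (l-k) mod P in {0,...,2s}  (shift-invariant, so 0-based indices are fine) *)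
definition Acyc :: "nat \<Rightarrow> nat \<Rightarrow> nat \<Rightarrow> nat \<Rightarrow> nat" where
  "Acyc P s k l = (if nat ((int l - int k) mod int P) \<le> 2 * s then 1 else 0)"

definition alpha :: "nat \<Rightarrow> nat \<Rightarrow> nat \<Rightarrow> nat set" where
  "alpha P s k = {l. l < P \<and> Acyc P s k l = 0}"

(* q_k : the unique row vector in C^{P-2s-1} with [q_k, 1] (C_L)_{.,alpha_k} = 0;
   represented as a function nat => complex vanishing at indices >= P-2s-1 *)
definition qvec :: "nat \<Rightarrow> nat \<Rightarrow> nat \<Rightarrow> nat \<Rightarrow> complex" where
  "qvec P s k = (THE q. (\<forall>j\<ge>P - 2 * s - 1. q j = 0) \<and>
      (\<forall>l\<in>alpha P s k.
         (\<Sum>j<P - 2 * s - 1. q j * CL P s j l) + 1 * CL P s (P - 2 * s - 1) l = 0))"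

definition Qmat :: "nat \<Rightarrow> nat \<Rightarrow> nat \<Rightarrow> nat \<Rightarrow> complex" where
  "Qmat P s k j = qvec P s k j"

(* W = [Q, 1_P] C_L  (a P x P matrix) *)
definition Wmat :: "nat \<Rightarrow> nat \<Rightarrow> nat \<Rightarrow> nat \<Rightarrow> complex" where
  "Wmat P s k l = (\<Sum>j<P - 2 * s - 1. Qmat P s k j * CL P s j l) + 1 * CL P s (P - 2 * s - 1) l"

(* The known entries (h_{P-2s}, ..., h_{P-1}) = f R C_R^dagger, stored at indices P-2s..P-1;
   R is d x P, f is 1 x d. *)
definition hknown :: "nat \<Rightarrow> nat \<Rightarrow> nat \<Rightarrow> (nat \<Rightarrow> real) \<Rightarrow> (nat \<Rightarrow> nat \<Rightarrow> complex) \<Rightarrow> nat \<Rightarrow> complex" where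
  "hknown P s d f R n =
     (if P - 2 * s \<le> n \<and> n < P then
        (\<Sum>l<P. (\<Sum>i<d. complex_of_real (f i) * R i l) * cnj (CR P s (n - (P - 2 * s)) l))
      else 0)"

definition beta_ok :: "nat \<Rightarrow> nat \<Rightarrow> (nat \<Rightarrow> complex) \<Rightarrow> (nat \<Rightarrow> complex) \<Rightarrow> bool" where
  "beta_ok P s h \<beta> =
     (\<forall>i\<in>{1..s}. (\<Sum>k<s. \<beta> k * h (P - s - i + k)) = h (P - i))"

primrec hiter :: "nat \<Rightarrow> nat \<Rightarrow> (nat \<Rightarrow> complex) \<Rightarrow> (nat \<Rightarrow> complex) \<Rightarrow> nat \<Rightarrow> nat \<Rightarrow> complex" where
  "hiter P s h0 \<beta> 0 = h0"
| "hiter P s h0 \<beta> (Suc l) =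
     (hiter P s h0 \<beta> l)(l := (\<Sum>u<s. \<beta> u * hiter P s h0 \<beta> l ((l + P + u - s) mod P)))"

definition phi_out :: "nat \<Rightarrow> nat \<Rightarrow> nat \<Rightarrow> (nat \<Rightarrow> real) \<Rightarrow> (nat \<Rightarrow> nat \<Rightarrow> complex)
    \<Rightarrow> (nat \<Rightarrow> complex) \<Rightarrow> nat set" where
  "phi_out P s d f R \<beta> =
     (let h = hiter P s (hknown P s d f R) \<beta> (P - 2 * s);
          t = (\<lambda>j. \<Sum>k<P. idft P j k * h k)
      in {j. 1 \<le> j \<and> j \<le> P \<and> t (j - 1) \<noteq> 0})"

definition fdist :: "nat \<Rightarrow> (nat \<Rightarrow> real) measure" where
  "fdist d = PiM {..<d} (\<lambda>_. density lborel (normal_density 1 1))"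

definition GWN :: "nat \<Rightarrow> nat \<Rightarrow> (nat \<Rightarrow> nat \<Rightarrow> real) \<Rightarrow> (nat \<Rightarrow> nat \<Rightarrow> real) \<Rightarrow> nat \<Rightarrow> nat \<Rightarrow> complex" where
  "GWN P s G N i l = (\<Sum>k<P. complex_of_real (G i k) * Wmat P s k l) + complex_of_real (N i l)"

definition colsupp :: "nat \<Rightarrow> nat \<Rightarrow> (nat \<Rightarrow> nat \<Rightarrow> real) \<Rightarrow> nat set" where
  "colsupp P d N = {j. 1 \<le> j \<and> j \<le> P \<and> (\<exists>i<d. N i (j - 1) \<noteq> 0)}"

end

theory Submission
  imports Defs "HOL-Computational_Algebra.Polynomial"
begin

text \<open>The rows of \<open>W\<close> lie in the span of the first \<open>P - 2s\<close> rows of the unitary matrix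
  \<open>C\<close>, so the data \<open>f (G W + N) C_R\<^sup>\<dagger>\<close> do not see \<open>G\<close>: they are the last \<open>2s\<close> entries of
  \<open>h = C\<^sup>\<dagger> v\<close> with \<open>v = f N\<close>, i.e. of the exponential sum
  \<open>h\<^sub>n = \<Sum>\<^sub>l v\<^sub>l z\<^sub>l\<^sup>n / \<surd>P\<close> over the at most \<open>s\<close> distinct roots of unity
  \<open>z\<^sub>l = \<omega>\<^sup>-\<^sup>l\<close> with \<open>v\<^sub>l \<noteq> 0\<close>.
  Such a sequence satisfies the order-\<open>s\<close> recurrence whose characteristic polynomial vanishes
  at the \<open>z\<^sub>l\<close>; conversely, by a Vandermonde argument, any \<open>\<beta>\<close> solving the \<open>s\<close> windowed
  equations has every such \<open>z\<^sub>l\<close> as a characteristic root. Hence the recursion rebuilds all of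
  \<open>h\<close> and \<open>C h = v\<close>. Finally, for fixed \<open>N\<close> each \<open>v\<^sub>l\<close> with \<open>n\<^sub>l \<noteq> 0\<close> is a nondegenerate
  Gaussian linear form in \<open>f\<close>, hence almost surely nonzero, so \<open>supp v = supp N\<close>.\<close>

lemma power_mult_commute: "x ^ (m * n) = (x ^ n) ^ m"
  for x :: "'a::monoid_mult"
  by (metis mult.commute power_mult)

lemma power_mod_of_power_eq_1:
  fixes x :: "'a::monoid_mult"
  assumes "x ^ P = 1"
  shows "x ^ (n mod P) = x ^ n"
proof -
  have "x ^ n = x ^ (P * (n div P) + n mod P)" by simp
  also have "\<dots> = (x ^ P) ^ (n div P) * x ^ (n mod P)" by (simp only: power_add power_mult)
  finally show ?thesis using assms by simp
qed

definition char_root :: "nat \<Rightarrow> (nat \<Rightarrow> 'a::comm_ring_1) \<Rightarrow> 'a \<Rightarrow> bool" where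
  "char_root s \<beta> x \<longleftrightarrow> (\<Sum>k<s. \<beta> k * x ^ k) = x ^ s"

definition exp_sum :: "'b set \<Rightarrow> ('b \<Rightarrow> 'a::comm_ring_1) \<Rightarrow> ('b \<Rightarrow> 'a) \<Rightarrow> nat \<Rightarrow> 'a" where
  "exp_sum A c z n = (\<Sum>l\<in>A. c l * z l ^ n)"

lemma poly_eq_sum_lessThan:
  fixes p :: "'a::comm_ring_1 poly"
  assumes "degree p < s"
  shows "poly p x = (\<Sum>t<s. coeff p t * x ^ t)"
proof -
  have "poly p x = (\<Sum>t\<le>degree p. coeff p t * x ^ t)" by (rule poly_altdef)
  also have "\<dots> = (\<Sum>t<s. coeff p t * x ^ t)"
    using assms by (intro sum.mono_neutral_left) (auto simp: coeff_eq_0)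
  finally show ?thesis .
qed

text \<open>Pairing the moments with the coefficients of \<open>\<Prod>m\<in>A-{l0}. (X - z m)\<close>
  isolates the coefficient at \<open>l0\<close>: a transposed Vandermonde system with distinct nodes.\<close>

lemma exp_sum_vanishing_imp_zero:
  fixes z e :: "'b \<Rightarrow> 'a::idom"
  assumes fin: "finite A" and card: "card A \<le> s" and inj: "inj_on z A"
    and moments: "\<And>t. t < s \<Longrightarrow> exp_sum A e z t = 0"
    and l0: "l0 \<in> A"
  shows "e l0 = 0"
proof -
  define L where "L = (\<Prod>m\<in>A - {l0}. [:- z m, 1:])"
  have "degree L = card (A - {l0})"
    unfolding L_def by (subst degree_prod_eq_sum_degree) auto
  then have deg: "degree L < s" using card_Diff1_less[OF fin l0] card by linarith
  have poly_L: "poly L (z l) = (\<Prod>m\<in>A - {l0}. z l - z m)" for l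
    unfolding L_def by (simp add: poly_prod)
  have "(\<Sum>l\<in>A. e l * poly L (z l)) = (\<Sum>t<s. coeff L t * exp_sum A e z t)"
    unfolding poly_eq_sum_lessThan[OF deg] exp_sum_def sum_distrib_left
    by (subst sum.swap) (intro sum.cong refl, simp add: mult_ac)
  also have "\<dots> = 0" using moments by simp
  also have "(\<Sum>l\<in>A. e l * poly L (z l)) = e l0 * poly L (z l0)"
    using fin l0 by (subst sum.mono_neutral_right[where S="{l0}"]) (auto simp: poly_L prod_zero_iff)
  finally have "e l0 * poly L (z l0) = 0" .
  moreover have "poly L (z l0) \<noteq> 0"
    using fin inj l0 by (auto simp: poly_L prod_zero_iff inj_on_def)
  ultimately show ?thesis by simp
qed

lemma exp_sum_recurrence:
  assumes "\<And>l. l \<in> A \<Longrightarrow> char_root s \<beta> (z l)"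
  shows "(\<Sum>k<s. \<beta> k * exp_sum A c z (m + k)) = exp_sum A c z (m + s)"
proof -
  have "(\<Sum>k<s. \<beta> k * exp_sum A c z (m + k)) = (\<Sum>l\<in>A. c l * z l ^ m * (\<Sum>k<s. \<beta> k * z l ^ k))"
    unfolding exp_sum_def sum_distrib_left
    by (subst sum.swap) (intro sum.cong refl, simp add: power_add mult_ac)
  also have "\<dots> = exp_sum A c z (m + s)"
    using assms by (simp add: exp_sum_def char_root_def power_add mult_ac)
  finally show ?thesis .
qed

lemma char_root_of_exp_sum_recurrence:
  fixes z c :: "'b \<Rightarrow> 'a::idom"
  assumes fin: "finite A" and card: "card A \<le> s" and inj: "inj_on z A"
    and nonzero: "\<And>l. l \<in> A \<Longrightarrow> c l \<noteq> 0 \<and> z l \<noteq> 0"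
    and rec: "\<And>t. t < s \<Longrightarrow>
      (\<Sum>k<s. \<beta> k * exp_sum A c z (m + t + k)) = exp_sum A c z (m + t + s)"
    and l0: "l0 \<in> A"
  shows "char_root s \<beta> (z l0)"
proof -
  define e where "e l = c l * z l ^ m * (z l ^ s - (\<Sum>k<s. \<beta> k * z l ^ k))" for l
  have "e l0 = 0"
  proof (rule exp_sum_vanishing_imp_zero[OF fin card inj _ l0])
    fix t assume t: "t < s"
    have "exp_sum A e z t = exp_sum A c z (m + t + s)
        - (\<Sum>l\<in>A. c l * z l ^ (m + t) * (\<Sum>k<s. \<beta> k * z l ^ k))"
      unfolding e_def exp_sum_def sum_subtractf[symmetric]
      by (intro sum.cong refl) (simp add: right_diff_distrib left_diff_distrib power_add mult_ac)
    also have "(\<Sum>l\<in>A. c l * z l ^ (m + t) * (\<Sum>k<s. \<beta> k * z l ^ k))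
             = (\<Sum>k<s. \<beta> k * exp_sum A c z (m + t + k))"
      unfolding exp_sum_def sum_distrib_left
      by (subst sum.swap) (intro sum.cong refl, simp add: power_add mult_ac)
    finally show "exp_sum A e z t = 0" using rec[OF t] by simp
  qed
  then show ?thesis using nonzero[OF l0] unfolding e_def char_root_def by simp
qed

lemma ex_common_char_roots:
  fixes z :: "'b \<Rightarrow> 'a::idom"
  assumes fin: "finite A" and card: "card A \<le> s"
  shows "\<exists>\<beta>. \<forall>l\<in>A. char_root s \<beta> (z l)"
proof -
  define p where "p = monom 1 (s - card A) * (\<Prod>l\<in>A. [:- z l, 1:])"
  have "degree (\<Prod>l\<in>A. [:- z l, 1:]) = card A"
    by (subst degree_prod_eq_sum_degree) auto
  then have deg: "degree p = s"
    unfolding p_def using fin card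
    by (subst degree_mult_eq) (auto simp: degree_monom_eq prod_zero_iff)
  have "lead_coeff p = 1"
    unfolding p_def lead_coeff_mult lead_coeff_prod by (simp add: degree_monom_eq)
  then have monic: "coeff p s = 1" using deg by simp
  have "char_root s (\<lambda>k. - coeff p k) (z l)" if "l \<in> A" for l
  proof -
    have "poly p (z l) = 0"
      unfolding p_def using that fin by (auto simp: poly_prod prod_zero_iff)
    moreover have "poly p (z l) = (\<Sum>k<s. coeff p k * z l ^ k) + z l ^ s"
      using poly_altdef[of p "z l"] deg monic by (simp add: lessThan_Suc_atMost[symmetric])
    ultimately show ?thesis
      unfolding char_root_def by (simp add: sum_negf add_eq_0_iff)
  qed
  then show ?thesis by blast
qed

definition unit_root :: "nat \<Rightarrow> complex" where
  "unit_root P = exp (2 * complex_of_real pi * \<i> / of_nat P)"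

lemma unit_root_power: "unit_root P ^ m = exp (2 * complex_of_real pi * \<i> * of_nat m / of_nat P)"
proof -
  have "2 * complex_of_real pi * \<i> * of_nat m / of_nat P
        = of_nat m * (2 * complex_of_real pi * \<i> / of_nat P)" by simp
  then show ?thesis unfolding unit_root_def by (simp only: exp_of_nat_mult)
qed

lemma idft_unit_root: "idft P j k = complex_of_real (1 / sqrt (real P)) * unit_root P ^ (j * k)"
  unfolding idft_def unit_root_power by (simp add: mult.assoc)

lemma idft_sym: "idft P j k = idft P k j"
  by (simp add: idft_def mult_ac)

lemma unit_root_power_eq_1_iff:
  assumes "P > 0"
  shows "unit_root P ^ m = 1 \<longleftrightarrow> P dvd m"
proof
  assume "unit_root P ^ m = 1"
  then obtain n :: int where "Im (2 * complex_of_real pi * \<i> * of_nat m / of_nat P) = of_int (2 * n) * pi"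
    unfolding unit_root_power exp_eq_1 by blast
  then have "2 * pi * real m / real P = 2 * pi * real_of_int n"
    by (simp add: Im_divide_of_nat)
  then have "int m = int P * n"
    using assms by (simp add: field_simps) (metis of_int_eq_iff of_int_mult of_int_of_nat_eq)
  then show "P dvd m"
    by (metis dvd_triv_left int_dvd_int_iff)
next
  assume "P dvd m"
  then obtain q where "m = P * q" by blast
  moreover have "unit_root P ^ P = 1"
    unfolding unit_root_power using assms by simp
  ultimately show "unit_root P ^ m = 1"
    by (simp add: power_mult)
qed

lemma unit_root_nonzero: "unit_root P \<noteq> 0"
  unfolding unit_root_def by simp

lemma unit_root_cnj: "cnj (unit_root P) = inverse (unit_root P)"
proof -
  have "norm (unit_root P) = 1" unfolding unit_root_def by (simp add: norm_exp_eq_Re)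
  then show ?thesis
    using complex_norm_square[of "unit_root P"] unit_root_nonzero[of P]
    by (simp add: field_simps)
qed

lemma unit_root_power_inj:
  assumes "j < P" "l < P" "unit_root P ^ j = unit_root P ^ l"
  shows "j = l"
proof -
  have key: "a = b" if ab: "a \<le> b" "b < P" "unit_root P ^ a = unit_root P ^ b" for a b
  proof -
    have "unit_root P ^ b = unit_root P ^ a * unit_root P ^ (b - a)"
      using ab(1) by (simp flip: power_add)
    then have "unit_root P ^ (b - a) = 1"
      using ab unit_root_nonzero[of P] by simp
    then have "P dvd b - a"
      using ab unit_root_power_eq_1_iff[of P] by simp
    then show "a = b" using ab by (auto dest: dvd_imp_le)
  qed
  show ?thesis using key[of j l] key[of l j] assms by (cases "j \<le> l") auto
qed

lemma sum_powers_root_of_unity: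
  fixes x :: complex
  assumes "x ^ P = 1"
  shows "(\<Sum>k<P. x ^ k) = (if x = 1 then of_nat P else 0)"
  using assms by (simp add: geometric_sum)

lemma idft_orthonormal:
  assumes "j < P" "l < P"
  shows "(\<Sum>k<P. idft P j k * cnj (idft P l k)) = (if j = l then 1 else 0)"
proof -
  define x where "x = unit_root P ^ j * cnj (unit_root P) ^ l"
  have P: "P > 0" using assms by simp
  have x_div: "x = unit_root P ^ j / unit_root P ^ l"
    by (simp add: x_def unit_root_cnj power_inverse divide_inverse)
  have "x ^ P = (unit_root P ^ P) ^ j / (unit_root P ^ P) ^ l"
    unfolding x_div power_divide by (simp only: mult.commute flip: power_mult)
  then have xP: "x ^ P = 1"
    using unit_root_power_eq_1_iff[OF P, of P] by simp
  have x1: "x = 1 \<longleftrightarrow> j = l"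
    using unit_root_power_inj[OF assms] unit_root_nonzero[of P] by (auto simp: x_div)
  have sq: "complex_of_real (1 / sqrt (real P)) * complex_of_real (1 / sqrt (real P)) = 1 / of_nat P"
    using P by (simp flip: of_real_mult)
  have "idft P j k * cnj (idft P l k) = x ^ k / of_nat P" for k
  proof -
    have "idft P j k * cnj (idft P l k)
        = (complex_of_real (1 / sqrt (real P)) * complex_of_real (1 / sqrt (real P)))
          * (unit_root P ^ (j * k) * cnj (unit_root P) ^ (l * k))"
      unfolding idft_unit_root by (simp add: mult_ac)
    also have "\<dots> = x ^ k / of_nat P"
      unfolding sq x_def by (simp add: power_mult power_mult_distrib)
    finally show ?thesis .
  qed
  then have "(\<Sum>k<P. idft P j k * cnj (idft P l k)) = (\<Sum>k<P. x ^ k) / of_nat P"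
    by (simp add: sum_divide_distrib)
  then show ?thesis
    using P by (simp add: sum_powers_root_of_unity[OF xP] x1)
qed

definition adj_idft :: "nat \<Rightarrow> (nat \<Rightarrow> complex) \<Rightarrow> nat \<Rightarrow> complex" where
  "adj_idft P v n = (\<Sum>l<P. v l * cnj (idft P n l))"

lemma idft_adj_idft:
  assumes "j < P"
  shows "(\<Sum>k<P. idft P j k * adj_idft P v k) = v j"
proof -
  have "(\<Sum>k<P. idft P j k * adj_idft P v k) = (\<Sum>l<P. v l * (\<Sum>k<P. idft P j k * cnj (idft P l k)))"
    unfolding adj_idft_def sum_distrib_left
    by (subst sum.swap) (intro sum.cong refl, subst idft_sym, rule mult.left_commute)
  also have "\<dots> = v j"
    using assms by (simp add: idft_orthonormal if_distrib cong: if_cong)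
  finally show ?thesis .
qed

lemma adj_idft_exp_sum:
  "adj_idft P v n = exp_sum {l. l < P \<and> v l \<noteq> 0}
      (\<lambda>l. v l * complex_of_real (1 / sqrt (real P))) (\<lambda>l. cnj (unit_root P) ^ l) n"
proof -
  have "adj_idft P v n = (\<Sum>l<P. (v l * complex_of_real (1 / sqrt (real P))) * (cnj (unit_root P) ^ l) ^ n)"
    unfolding adj_idft_def idft_unit_root
    by (intro sum.cong refl) (simp add: mult.assoc power_mult_commute)
  also have "\<dots> = exp_sum {l. l < P \<and> v l \<noteq> 0}
      (\<lambda>l. v l * complex_of_real (1 / sqrt (real P))) (\<lambda>l. cnj (unit_root P) ^ l) n"
    unfolding exp_sum_def by (rule sum.mono_neutral_right) auto
  finally show ?thesis .
qed

lemma adj_idft_mod: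
  assumes "P > 0"
  shows "adj_idft P v (n mod P) = adj_idft P v n"
proof -
  have "idft P (n mod P) l = idft P n l" for l
  proof -
    have "(unit_root P ^ l) ^ P = 1"
      using unit_root_power_eq_1_iff[OF assms, of "P * l"] by (simp add: power_mult_commute)
    then have "(unit_root P ^ l) ^ (n mod P) = (unit_root P ^ l) ^ n"
      by (rule power_mod_of_power_eq_1)
    then show ?thesis unfolding idft_unit_root power_mult_commute by simp
  qed
  then show ?thesis unfolding adj_idft_def by simp
qed

text \<open>Whatever \<open>Q\<close> is, every row of \<open>W\<close> is a combination of the first
  \<open>P - 2s\<close> rows of the unitary matrix \<open>C\<close>.\<close>

lemma Wmat_orthogonal_tail_rows:
  assumes "P \<ge> 2 * s + 1" "P - 2 * s \<le> n" "n < P"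
  shows "(\<Sum>l<P. Wmat P s k l * cnj (idft P n l)) = 0"
proof -
  define M where "M = P - 2 * s - 1"
  have orth: "(\<Sum>l<P. idft P j l * cnj (idft P n l)) = 0" if "j \<le> M" for j
    using idft_orthonormal[of j P n] that assms unfolding M_def by auto
  have "(\<Sum>l<P. Wmat P s k l * cnj (idft P n l))
      = (\<Sum>l<P. (\<Sum>j<M. Qmat P s k j * (idft P j l * cnj (idft P n l))) + idft P M l * cnj (idft P n l))"
    unfolding Wmat_def CL_def M_def[symmetric]
    by (intro sum.cong refl) (simp add: distrib_right sum_distrib_right mult.assoc)
  also have "\<dots> = (\<Sum>j<M. Qmat P s k j * (\<Sum>l<P. idft P j l * cnj (idft P n l)))
                  + (\<Sum>l<P. idft P M l * cnj (idft P n l))"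
    by (simp only: sum.distrib sum_distrib_left sum.swap[of _ "{..<P}" "{..<M}"])
  also have "\<dots> = 0" using orth by simp
  finally show ?thesis .
qed

definition vecmat :: "nat \<Rightarrow> (nat \<Rightarrow> real) \<Rightarrow> (nat \<Rightarrow> nat \<Rightarrow> real) \<Rightarrow> nat \<Rightarrow> real" where
  "vecmat d f N l = (\<Sum>i<d. f i * N i l)"

lemma hknown_GWN:
  assumes "P \<ge> 2 * s + 1" "P - 2 * s \<le> n" "n < P"
  shows "hknown P s d f (GWN P s G N) n = adj_idft P (\<lambda>l. complex_of_real (vecmat d f N l)) n"
proof -
  define g where "g k = (\<Sum>i<d. complex_of_real (f i) * complex_of_real (G i k))" for k
  have fR: "(\<Sum>i<d. complex_of_real (f i) * GWN P s G N i l)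
      = (\<Sum>k<P. g k * Wmat P s k l) + complex_of_real (vecmat d f N l)" for l
  proof -
    have "(\<Sum>i<d. complex_of_real (f i) * GWN P s G N i l)
       = (\<Sum>i<d. (\<Sum>k<P. complex_of_real (f i) * complex_of_real (G i k) * Wmat P s k l)
                  + complex_of_real (f i * N i l))"
      unfolding GWN_def by (intro sum.cong refl) (simp add: distrib_left sum_distrib_left mult.assoc)
    also have "\<dots> = (\<Sum>k<P. g k * Wmat P s k l) + complex_of_real (vecmat d f N l)"
      unfolding g_def vecmat_def of_real_sum
      by (simp only: sum.distrib sum_distrib_right sum.swap[of _ "{..<d}" "{..<P}"])
    finally show ?thesis .
  qed
  have "hknown P s d f (GWN P s G N) n
      = (\<Sum>l<P. ((\<Sum>k<P. g k * Wmat P s k l) + complex_of_real (vecmat d f N l)) * cnj (idft P n l))"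
    unfolding hknown_def CR_def using assms by (simp add: fR)
  also have "\<dots> = (\<Sum>l<P. (\<Sum>k<P. g k * (Wmat P s k l * cnj (idft P n l)))
                         + complex_of_real (vecmat d f N l) * cnj (idft P n l))"
    by (intro sum.cong refl) (simp add: distrib_right sum_distrib_right mult.assoc)
  also have "\<dots> = (\<Sum>k<P. g k * (\<Sum>l<P. Wmat P s k l * cnj (idft P n l)))
                  + adj_idft P (\<lambda>l. complex_of_real (vecmat d f N l)) n"
    unfolding adj_idft_def sum.distrib sum_distrib_left by (subst sum.swap) (rule refl)
  also have "\<dots> = adj_idft P (\<lambda>l. complex_of_real (vecmat d f N l)) n"
    using Wmat_orthogonal_tail_rows[OF assms] by simp
  finally show ?thesis .
qed

lemma hiter_source_index:
  fixes P s l u :: nat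
  assumes P: "P \<ge> 2 * s + 1" and l: "l < P - 2 * s" and u: "u < s"
  defines "i \<equiv> (l + P + u - s) mod P"
  shows "i < l \<or> (P - 2 * s \<le> i \<and> i < P)"
proof (cases "s \<le> l + u")
  case True
  then have "l + P + u - s = l + u - s + P" by simp
  then have "i = (l + u - s + P) mod P"
    unfolding i_def by (simp only:)
  also have "\<dots> = l + u - s"
    using l u by simp
  finally show ?thesis using True u by linarith
next
  case False
  then have "i = l + P + u - s"
    unfolding i_def using P by simp
  then show ?thesis using False P by linarith
qed

text \<open>The recursion only ever reads entries already holding the target values: either the
  known window \<open>[P - 2s, P)\<close> or entries it has itself overwritten.\<close>

lemma hiter_eq_recurrent_sequence:
  fixes hk H \<beta> :: "nat \<Rightarrow> complex"
  assumes P: "P \<ge> 2 * s + 1"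
    and known: "\<And>n. P - 2 * s \<le> n \<Longrightarrow> n < P \<Longrightarrow> hk n = H n"
    and periodic: "\<And>n. H (n mod P) = H n"
    and rec: "\<And>m. (\<Sum>u<s. \<beta> u * H (m + u)) = H (m + s)"
  shows "l \<le> P - 2 * s \<Longrightarrow> n < l \<or> (P - 2 * s \<le> n \<and> n < P) \<Longrightarrow> hiter P s hk \<beta> l n = H n"
proof (induction l arbitrary: n)
  case 0
  then show ?case using known by simp
next
  case (Suc l)
  have IH: "hiter P s hk \<beta> l i = H i" if "i < l \<or> (P - 2 * s \<le> i \<and> i < P)" for i
    using Suc.IH Suc.prems(1) that by simp
  show ?case
  proof (cases "n = l")
    case False
    then show ?thesis using Suc.prems IH by auto
  next
    case True
    have "hiter P s hk \<beta> l ((l + P + u - s) mod P) = H (l + P - s + u)" if "u < s" for u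
    proof -
      have "hiter P s hk \<beta> l ((l + P + u - s) mod P) = H ((l + P + u - s) mod P)"
        using hiter_source_index[OF P _ that, of l] Suc.prems(1) by (intro IH) simp
      also have "\<dots> = H (l + P - s + u)"
        using periodic[of "l + P + u - s"] P by (simp add: that)
      finally show ?thesis .
    qed
    then have "hiter P s hk \<beta> (Suc l) n = (\<Sum>u<s. \<beta> u * H (l + P - s + u))"
      using True by simp
    also have "\<dots> = H (l + P)"
      using rec[of "l + P - s"] P by simp
    also have "\<dots> = H n"
      using periodic[of "l + P"] periodic[of l] True by simp
    finally show ?thesis .
  qed
qed

lemma beta_ok_iff_recurrence_window:
  assumes P: "P \<ge> 2 * s + 1"
    and known: "\<And>n. P - 2 * s \<le> n \<Longrightarrow> n < P \<Longrightarrow> hk n = H n"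
  shows "beta_ok P s hk \<beta> \<longleftrightarrow>
    (\<forall>t<s. (\<Sum>k<s. \<beta> k * H (P - 2 * s + t + k)) = H (P - 2 * s + t + s))"
proof -
  have known_sum: "(\<Sum>k<s. \<beta> k * hk (P - 2 * s + t + k)) = (\<Sum>k<s. \<beta> k * H (P - 2 * s + t + k))"
    if "t < s" for t
    using that P by (intro sum.cong refl arg_cong2[where f="(*)"] known) auto
  have known_rhs: "hk (P - 2 * s + t + s) = H (P - 2 * s + t + s)" if "t < s" for t
    using that P by (intro known) auto
  have reindex: "(\<forall>i\<in>{1..s}. R i) \<longleftrightarrow> (\<forall>t<s. R (s - t))" for R
  proof
    assume R: "\<forall>t<s. R (s - t)"
    show "\<forall>i\<in>{1..s}. R i"
    proof
      fix i assume "i \<in> {1..s}"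
      then have "s - i < s" "s - (s - i) = i" by auto
      then show "R i" using R by metis
    qed
  qed simp
  have "beta_ok P s hk \<beta> \<longleftrightarrow>
      (\<forall>t<s. (\<Sum>k<s. \<beta> k * hk (P - s - (s - t) + k)) = hk (P - (s - t)))"
    unfolding beta_ok_def by (rule reindex)
  also have "\<dots> \<longleftrightarrow>
      (\<forall>t<s. (\<Sum>k<s. \<beta> k * H (P - 2 * s + t + k)) = H (P - 2 * s + t + s))"
  proof (rule all_cong)
    fix t assume t: "t < s"
    then have "P - s - (s - t) + k = P - 2 * s + t + k" "P - (s - t) = P - 2 * s + t + s" for k
      using P by auto
    then show "((\<Sum>k<s. \<beta> k * hk (P - s - (s - t) + k)) = hk (P - (s - t))) \<longleftrightarrow>
        ((\<Sum>k<s. \<beta> k * H (P - 2 * s + t + k)) = H (P - 2 * s + t + s))"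
      by (simp only: known_sum[OF t] known_rhs[OF t])
  qed
  finally show ?thesis .
qed

lemma sparse_recovery_from_tail:
  fixes v hk :: "nat \<Rightarrow> complex"
  assumes P: "P \<ge> 2 * s + 1"
    and sparse: "card {l. l < P \<and> v l \<noteq> 0} \<le> s"
    and known: "\<And>n. P - 2 * s \<le> n \<Longrightarrow> n < P \<Longrightarrow> hk n = adj_idft P v n"
  shows "\<exists>\<beta>. beta_ok P s hk \<beta>"
    and "beta_ok P s hk \<beta> \<Longrightarrow> j < P \<Longrightarrow> (\<Sum>k<P. idft P j k * hiter P s hk \<beta> (P - 2 * s) k) = v j"
proof -
  define A where "A = {l. l < P \<and> v l \<noteq> 0}"
  define c where "c l = v l * complex_of_real (1 / sqrt (real P))" for l
  define z where "z l = cnj (unit_root P) ^ l" for l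
  have P0: "P > 0" using P by simp
  have H: "adj_idft P v n = exp_sum A c z n" for n
    unfolding A_def c_def z_def by (rule adj_idft_exp_sum)
  have fin: "finite A" unfolding A_def by simp
  have card: "card A \<le> s" using sparse unfolding A_def .
  have inj: "inj_on z A"
  proof (rule inj_onI)
    fix j l assume "j \<in> A" "l \<in> A" "z j = z l"
    then show "j = l"
      unfolding A_def z_def by (auto simp flip: complex_cnj_power intro: unit_root_power_inj)
  qed
  have nonzero: "c l \<noteq> 0 \<and> z l \<noteq> 0" if "l \<in> A" for l
    using that P0 unfolding A_def c_def z_def by (simp add: unit_root_nonzero)
  have window: "beta_ok P s hk \<beta> \<longleftrightarrow> (\<forall>t<s.
      (\<Sum>k<s. \<beta> k * exp_sum A c z (P - 2 * s + t + k)) = exp_sum A c z (P - 2 * s + t + s))" for \<beta>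
    using beta_ok_iff_recurrence_window[OF P, of hk "exp_sum A c z"] known by (simp add: H)
  have rec: "(\<Sum>k<s. \<beta> k * exp_sum A c z (m + k)) = exp_sum A c z (m + s)"
    if "\<forall>l\<in>A. char_root s \<beta> (z l)" for \<beta> m
    using that by (intro exp_sum_recurrence) blast
  obtain \<beta>0 where "\<forall>l\<in>A. char_root s \<beta>0 (z l)"
    using ex_common_char_roots[OF fin card] by blast
  then show "\<exists>\<beta>. beta_ok P s hk \<beta>"
    unfolding window using rec by blast
  assume "beta_ok P s hk \<beta>" and j: "j < P"
  then have "(\<Sum>k<s. \<beta> k * exp_sum A c z (P - 2 * s + t + k)) = exp_sum A c z (P - 2 * s + t + s)"
    if "t < s" for t
    using that unfolding window by blast
  then have roots: "\<forall>l\<in>A. char_root s \<beta> (z l)"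
    using char_root_of_exp_sum_recurrence[OF fin card inj nonzero] by blast
  have "hiter P s hk \<beta> (P - 2 * s) n = adj_idft P v n" if "n < P" for n
  proof (intro hiter_eq_recurrent_sequence[OF P])
    show "\<And>m. (\<Sum>u<s. \<beta> u * adj_idft P v (m + u)) = adj_idft P v (m + s)"
      unfolding H by (rule rec[OF roots])
  qed (use that P0 known adj_idft_mod in auto)
  then show "(\<Sum>k<P. idft P j k * hiter P s hk \<beta> (P - 2 * s) k) = v j"
    using idft_adj_idft[OF j] by simp
qed

lemma phi_out_GWN:
  assumes P: "P \<ge> 2 * s + 1" and sparse: "card (colsupp P d N) \<le> s"
    and generic: "\<And>l. l < P \<Longrightarrow> (\<exists>i<d. N i l \<noteq> 0) \<Longrightarrow> vecmat d f N l \<noteq> 0"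
  shows "(\<exists>\<beta>. beta_ok P s (hknown P s d f (GWN P s G N)) \<beta>) \<and>
    (\<forall>\<beta>. beta_ok P s (hknown P s d f (GWN P s G N)) \<beta> \<longrightarrow>
      phi_out P s d f (GWN P s G N) \<beta> = colsupp P d N)"
proof -
  define v where "v l = complex_of_real (vecmat d f N l)" for l
  have supp: "v l \<noteq> 0 \<longleftrightarrow> (\<exists>i<d. N i l \<noteq> 0)" if "l < P" for l
  proof -
    have "vecmat d f N l \<noteq> 0 \<Longrightarrow> \<exists>i<d. N i l \<noteq> 0"
      unfolding vecmat_def by (rule ccontr) simp
    then show ?thesis using generic[OF that] unfolding v_def by auto
  qed
  have colsupp: "colsupp P d N = Suc ` {l. l < P \<and> v l \<noteq> 0}"
  proof (rule set_eqI)
    fix j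
    show "j \<in> colsupp P d N \<longleftrightarrow> j \<in> Suc ` {l. l < P \<and> v l \<noteq> 0}"
      using supp[of "j - 1"] by (cases j) (auto simp: colsupp_def)
  qed
  have "card {l. l < P \<and> v l \<noteq> 0} \<le> s"
    using sparse unfolding colsupp by (simp add: card_image)
  note recovery = sparse_recovery_from_tail[OF P this, of "hknown P s d f (GWN P s G N)"]
  have known: "hknown P s d f (GWN P s G N) n = adj_idft P v n" if "P - 2 * s \<le> n" "n < P" for n
    unfolding v_def using hknown_GWN[OF P that] .
  have colsupp_v: "colsupp P d N = {j. 1 \<le> j \<and> j \<le> P \<and> v (j - 1) \<noteq> 0}"
    unfolding colsupp by force
  show ?thesis
    using recovery(1)[OF known] recovery(2)[OF known]
    unfolding phi_out_def Let_def colsupp_v by (auto intro!: Collect_cong)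
qed

lemma emeasure_normal_singleton: "emeasure (density lborel (normal_density \<mu> \<sigma>)) {c} = 0"
proof -
  have "emeasure (density lborel (normal_density \<mu> \<sigma>)) {c}
      = (\<integral>\<^sup>+ y. ennreal (normal_density \<mu> \<sigma> y) * indicator {c} y \<partial>lborel)"
    by (rule emeasure_density) auto
  also have "\<dots> = 0" by simp
  finally show ?thesis .
qed

text \<open>Fubini in the coordinate \<open>i0\<close>: for fixed remaining coordinates the linear form
  vanishes at a single value of \<open>f i0\<close>, a null set for the normal distribution.\<close>

lemma AE_linear_form_nonzero:
  fixes a :: "nat \<Rightarrow> real"
  assumes i0: "i0 < d" "a i0 \<noteq> 0"
  shows "AE f in fdist d. (\<Sum>i<d. f i * a i) \<noteq> 0"
proof -
  define M where "M = (\<lambda>_::nat. density lborel (normal_density 1 1))"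
  interpret product_sigma_finite M
    unfolding product_sigma_finite_def M_def
    using prob_space_normal_density[of 1 1] prob_space_imp_sigma_finite by simp
  define I where "I = {..<d} - {i0}"
  have dI: "{..<d} = insert i0 I" and I: "finite I" "i0 \<notin> I"
    using i0 unfolding I_def by auto
  define S where "S = {f \<in> space (PiM {..<d} M). (\<Sum>i<d. f i * a i) = 0}"
  have "(\<lambda>f. \<Sum>i<d. f i * a i) \<in> borel_measurable (PiM {..<d} M)"
  proof (intro borel_measurable_sum borel_measurable_times borel_measurable_const)
    fix i assume "i \<in> {..<d}"
    then have "(\<lambda>x. x i) \<in> PiM {..<d} M \<rightarrow>\<^sub>M M i" by (rule measurable_component_singleton)
    then show "(\<lambda>x. x i) \<in> borel_measurable (PiM {..<d} M)"
      by (subst measurable_cong_sets[of _ "PiM {..<d} M" "borel" "M i"]) (simp_all add: M_def)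
  qed
  from measurable_sets[OF this, of "{0}"]
  have S: "S \<in> sets (PiM {..<d} M)"
    unfolding S_def by (simp add: vimage_def Int_def conj_commute)
  have "emeasure (PiM {..<d} M) S = integral\<^sup>N (PiM (insert i0 I) M) (indicator S)"
    using S dI by simp
  also have "\<dots> = (\<integral>\<^sup>+ x. (\<integral>\<^sup>+ y. indicator S (x(i0 := y)) \<partial>(M i0)) \<partial>(PiM I M))"
    using S dI by (intro product_nn_integral_insert[OF I]) simp
  also have "\<dots> = (\<integral>\<^sup>+ x. 0 \<partial>(PiM I M))"
  proof (rule nn_integral_cong)
    fix x
    define c where "c = - (\<Sum>i\<in>I. x i * a i) / a i0"
    have "(\<integral>\<^sup>+ y. indicator S (x(i0 := y)) \<partial>(M i0)) \<le> (\<integral>\<^sup>+ y. indicator {c} y \<partial>(M i0))"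
    proof (rule nn_integral_mono)
      fix y
      have "(\<Sum>i<d. (x(i0 := y)) i * a i) = y * a i0 + (\<Sum>i\<in>I. x i * a i)"
        unfolding dI using I by (simp add: sum.insert) (intro sum.cong, auto)
      then show "indicator S (x(i0 := y)) \<le> (indicator {c} y :: ennreal)"
        using i0 unfolding S_def c_def by (auto simp: indicator_def field_simps)
    qed
    also have "\<dots> = 0"
      by (simp add: M_def emeasure_normal_singleton)
    finally show "(\<integral>\<^sup>+ y. indicator S (x(i0 := y)) \<partial>(M i0)) = 0" by simp
  qed
  finally have "emeasure (PiM {..<d} M) S = 0" by simp
  then show ?thesis
    unfolding fdist_def M_def[symmetric]
    by (subst AE_iff_measurable[OF S]) (auto simp: S_def)
qed

theorem lemma4:
  fixes s P d :: nat and G N :: "nat \<Rightarrow> nat \<Rightarrow> real"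
  assumes "s \<ge> 1" and "P \<ge> 2 * s + 1" and "d \<ge> 1"
    and "card (colsupp P d N) \<le> s"
  shows "AE f in fdist d.
           (\<exists>\<beta>. beta_ok P s (hknown P s d f (GWN P s G N)) \<beta>) \<and>
           (\<forall>\<beta>. beta_ok P s (hknown P s d f (GWN P s G N)) \<beta> \<longrightarrow>
                 phi_out P s d f (GWN P s G N) \<beta> = colsupp P d N)"
proof -
  have "AE f in fdist d. \<forall>l\<in>{l. l < P \<and> (\<exists>i<d. N i l \<noteq> 0)}. vecmat d f N l \<noteq> 0"
    unfolding vecmat_def by (rule AE_finite_allI) (auto intro: AE_linear_form_nonzero)
  then show ?thesis
    by (rule eventually_mono) (rule phi_out_GWN[OF assms(2,4)], auto)
qed

end
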